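(* Let $P$ be a fixed tree poset with $|P|$ elements. For all integers $q\geq1$ and reals $\varepsilon>0$ there exists $\delta>0$ such that the following holds. If $\mathcal{F}\subseteq\widetilde{\mathcal{B}}_n$ satisfies $\mu(\mathcal{F})\geq q-1+\varepsilon$, then there exists a nested sequence $\mathcal{M}^{|P|}\subseteq\mathcal{M}^{|P|-1}\subseteq\cdots\subseteq\mathcal{M}^0$ of families of $q$-marked chains with markers from $\mathcal{F}$ such that for all $j\in[|P|]$: - for each $(\chi,Q)\in\mathcal{M}^j$ and $F\in Q$, $F$ is $\delta$-robust with respect to $\mathcal{M}^{j-1}$; - for each $i\in[q]$, $|\mathcal{L}^i(\mathcal{M}^j)|\geq\frac{2\varepsilon}{3q}\min_{F\in\mathcal{F}}\binom{n}{|F|}$.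
   Context: $\widetilde{\mathcal{B}}_n=\{F\subseteq[n]: |\,|F|-n/2\,|<2\sqrt{n\ln n}\}$. $\mu(\mathcal{F})=\sum_{F\in\mathcal{F}}1/\binom{n}{|F|}$ (Lubell weight). $\mathcal{C}$ is the set of full chains $\emptyset=C_0\subsetneq\cdots\subsetneq C_n=[n]$ (identified with their member sets). A $q$-chain is $(F_1,\dots,F_q)$ with $F_1\supsetneq\cdots\supsetneq F_q$, $F_i$ being its $i$-th member; a $q$-marked chain with markers from $\mathcal{F}$ is $(\chi,Q)$ with $\chi\in\mathcal{C}$ and $Q$ a $q$-chain of members of $\mathcal{F}$ lying on $\chi$. For a family $\mathcal{M}$ of $q$-marked chains, $\mathcal{L}^i(\mathcal{M})$ is the set of $D$ that are the $i$-th member of $Q$ for some $(\chi,Q)\in\mathcal{M}$, and $\mathcal{M}(F,i)$ is the set of $(\chi,Q)\in\mathcal{M}$ with $F$ the $i$-th member of $Q$. With $\chi_0$ a uniformly random full chain: $F$ is $(i,\delta)$-lower bad w.r.t. $\mathcal{M}$ if $\mathcal{M}(F,i)\neq\emptyset$ and there is $\mathcal{W}\subseteq2^{[n]}$ with (a) $D\subseteq F$ for all $D\in\mathcal{W}$, (b) $Q\cap\mathcal{W}\neq\emptyset$ for all $(\chi,Q)\in\mathcal{M}(F,i)$, (c) $\Pr[\chi_0\cap\mathcal{W}\neq\emptyset\mid F\in\chi_0]\le\delta$; $(i,\delta)$-upper bad is defined identically with $D\supseteq F$ in (a). $F$ is $\delta$-robust w.r.t. $\mathcal{M}$ if for all $i\in[q]$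 it is neither $(i,\delta)$-lower bad nor $(i,\delta)$-upper bad. *)

theory Defs
  imports Complex_Main
begin

definition poset_on :: "'a set \<Rightarrow> ('a \<Rightarrow> 'a \<Rightarrow> bool) \<Rightarrow> bool" where
  "poset_on P le \<longleftrightarrow>
     (\<forall>x\<in>P. le x x) \<and>
     (\<forall>x\<in>P. \<forall>y\<in>P. le x y \<and> le y x \<longrightarrow> x = y) \<and>
     (\<forall>x\<in>P. \<forall>y\<in>P. \<forall>z\<in>P. le x y \<and> le y z \<longrightarrow> le x z)"

definition covers :: "'a set \<Rightarrow> ('a \<Rightarrow> 'a \<Rightarrow> bool) \<Rightarrow> 'a \<Rightarrow> 'a \<Rightarrow> bool" where
  "covers P le x y \<longleftrightarrow> x \<in> P \<and> y \<in> P \<and> le x y \<and> x \<noteq> y \<and>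
     \<not> (\<exists>z\<in>P. le x z \<and> le z y \<and> z \<noteq> x \<and> z \<noteq> y)"

definition hasse_edges :: "'a set \<Rightarrow> ('a \<Rightarrow> 'a \<Rightarrow> bool) \<Rightarrow> 'a set set" where
  "hasse_edges P le = {{x, y} | x y. covers P le x y}"

definition tree_poset :: "'a set \<Rightarrow> ('a \<Rightarrow> 'a \<Rightarrow> bool) \<Rightarrow> bool" where
  "tree_poset P le \<longleftrightarrow> finite P \<and> P \<noteq> {} \<and> poset_on P le \<and>
     (\<forall>x\<in>P. \<forall>y\<in>P. (\<lambda>a b. covers P le a b \<or> covers P le b a)\<^sup>*\<^sup>* x y) \<and>
     card (hasse_edges P le) = card P - 1"

definition Btilde :: "nat \<Rightarrow> nat set set" where
  "Btilde n = {F. F \<subseteq> {1..n} \<and>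
     \<bar>real (card F) - real n / 2\<bar> < 2 * sqrt (real n * ln (real n))}"

definition lubell :: "nat \<Rightarrow> nat set set \<Rightarrow> real" where
  "lubell n \<F> = (\<Sum>F\<in>\<F>. 1 / real (n choose card F))"

text \<open>Full chains, identified with their sets of members.\<close>
definition full_chains :: "nat \<Rightarrow> nat set set set" where
  "full_chains n = {C ` {0..n} | C. C 0 = {} \<and> C n = {1..n} \<and> (\<forall>i<n. C i \<subset> C (Suc i))}"

text \<open>A q-chain (F_1, ..., F_q) with F_1 strictly containing F_2 etc.; the i-th member
  (1-based) is Q ! (i - 1).\<close>
definition q_chain :: "nat \<Rightarrow> nat set list \<Rightarrow> bool" where
  "q_chain q Q \<longleftrightarrow> length Q = q \<and> (\<forall>i. Suc i < q \<longrightarrow> Q ! (Suc i) \<subset> Q ! i)"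

definition marked_chains :: "nat \<Rightarrow> nat \<Rightarrow> nat set set \<Rightarrow> (nat set set \<times> nat set list) set" where
  "marked_chains n q \<F> = {(\<chi>, Q). \<chi> \<in> full_chains n \<and> q_chain q Q \<and> set Q \<subseteq> \<F> \<and> set Q \<subseteq> \<chi>}"

definition Lmem :: "nat \<Rightarrow> (nat set set \<times> nat set list) set \<Rightarrow> nat set set" where
  "Lmem i M = {D. \<exists>(\<chi>, Q)\<in>M. Q ! (i - 1) = D}"

definition Msub :: "(nat set set \<times> nat set list) set \<Rightarrow> nat set \<Rightarrow> nat \<Rightarrow> (nat set set \<times> nat set list) set" where
  "Msub M F i = {(\<chi>, Q) \<in> M. Q ! (i - 1) = F}"

text \<open>Pr[chi_0 meets W | F in chi_0] for a uniformly random full chain chi_0.\<close>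
definition cond_prob :: "nat \<Rightarrow> nat set set \<Rightarrow> nat set \<Rightarrow> real" where
  "cond_prob n W F =
     real (card {\<chi> \<in> full_chains n. F \<in> \<chi> \<and> \<chi> \<inter> W \<noteq> {}}) /
     real (card {\<chi> \<in> full_chains n. F \<in> \<chi>})"

definition lower_bad :: "nat \<Rightarrow> (nat set set \<times> nat set list) set \<Rightarrow> nat \<Rightarrow> real \<Rightarrow> nat set \<Rightarrow> bool" where
  "lower_bad n M i \<delta> F \<longleftrightarrow> Msub M F i \<noteq> {} \<and>
     (\<exists>W. W \<subseteq> Pow {1..n} \<and> (\<forall>D\<in>W. D \<subseteq> F) \<and>
          (\<forall>(\<chi>, Q)\<in>Msub M F i. set Q \<inter> W \<noteq> {}) \<and> cond_prob n W F \<le> \<delta>)"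

definition upper_bad :: "nat \<Rightarrow> (nat set set \<times> nat set list) set \<Rightarrow> nat \<Rightarrow> real \<Rightarrow> nat set \<Rightarrow> bool" where
  "upper_bad n M i \<delta> F \<longleftrightarrow> Msub M F i \<noteq> {} \<and>
     (\<exists>W. W \<subseteq> Pow {1..n} \<and> (\<forall>D\<in>W. F \<subseteq> D) \<and>
          (\<forall>(\<chi>, Q)\<in>Msub M F i. set Q \<inter> W \<noteq> {}) \<and> cond_prob n W F \<le> \<delta>)"

definition robust :: "nat \<Rightarrow> nat \<Rightarrow> (nat set set \<times> nat set list) set \<Rightarrow> real \<Rightarrow> nat set \<Rightarrow> bool" where
  "robust n q M \<delta> F \<longleftrightarrow> (\<forall>i\<in>{1..q}. \<not> lower_bad n M i \<delta> F \<and> \<not> upper_bad n M i \<delta> F)"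

end

(*
  For a set A of allowed pairs (F, i), with F \<in> \<F> and i \<in> [q], let T_A(\<chi>) be the largest
  number of pairwise disjoint q-chains on the full chain \<chi> whose i-th member F always satisfies
  (F, i) \<in> A, and let M_A consist of the marked chains formed by such q-chains.  Choose A
  maximising  \<Sum>_\<chi> T_A(\<chi>) - \<delta> \<Sum>_{(F,i) \<in> A} #{\<chi> : F \<in> \<chi>}.  If F were (i, \<delta>/2)-bad for
  M_A with witness W, forbidding (F, i) would cost at most the chains through F meeting W, i.e.
  at most \<delta>/2 #{\<chi> : F \<in> \<chi>}, while saving \<delta> #{\<chi> : F \<in> \<chi>} of penalty.  So M_A is robust
  with respect to itself, and the nested sequence can be taken constant.

  For A = \<F> \<times> [q] a greedy packing gives T_A(\<chi>) \<ge> (|\<F> \<inter> \<chi>| - q + 1)/q; comparing the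
  maximiser with it (after shrinking \<F> to Lubell weight at most q + \<epsilon>) gives
  \<Sum>_\<chi> T_A(\<chi>) \<ge> 2\<epsilon>/(3q) #{\<chi>}.  As T_A(\<chi>) \<le> |L^i(M_A) \<inter> \<chi>|, the family L^i(M_A) has
  Lubell weight at least 2\<epsilon>/(3q), which bounds its size from below.
*)
theory Submission
  imports Defs "HOL-Library.Disjoint_Sets"
begin

lemma finite_ex_arg_max:
  fixes f :: "'a \<Rightarrow> 'b::linorder"
  assumes "finite A" and "A \<noteq> {}"
  obtains x where "x \<in> A" and "\<And>y. y \<in> A \<Longrightarrow> f y \<le> f x"
proof -
  have "Max (f ` A) \<in> f ` A" using assms by simp
  then obtain x where "x \<in> A" "f x = Max (f ` A)" by auto
  then show ?thesis using that assms(1) by auto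
qed

lemma sum_card_filter_mem_swap:
  assumes "finite X" and "finite G"
  shows "(\<Sum>g\<in>G. card {x\<in>X. g \<in> x}) = (\<Sum>x\<in>X. card {g\<in>G. g \<in> x})"
proof -
  have "card {x\<in>X. g \<in> x} = (\<Sum>x\<in>X. of_bool (g \<in> x))" for g
    using assms(1) by (simp add: Int_def)
  moreover have "card {g\<in>G. g \<in> x} = (\<Sum>g\<in>G. of_bool (g \<in> x))" for x
    using assms(2) by (simp add: Int_def)
  ultimately show ?thesis using sum.swap by simp
qed

lemma exists_bij_betw_image_eq:
  assumes "finite S" and "F \<subseteq> S" and "G \<subseteq> S" and "card F = card G"
  obtains \<pi> where "bij_betw \<pi> S S" and "\<pi> ` F = G"
proof -
  have "finite F" "finite G" using assms(1-3) finite_subset by auto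
  then obtain f where f: "bij_betw f F G" using assms(4) finite_same_card_bij by blast
  have "card (S - F) = card (S - G)"
    using assms \<open>finite F\<close> \<open>finite G\<close> by (simp add: card_Diff_subset)
  then obtain g where g: "bij_betw g (S - F) (S - G)"
    using finite_same_card_bij assms(1) by blast
  have "bij_betw (\<lambda>x. if x \<in> F then f x else g x) (F \<union> (S - F)) (G \<union> (S - G))"
    by (rule bij_betw_disjoint_Un[OF f g]) auto
  moreover have "F \<union> (S - F) = S" "G \<union> (S - G) = S" using assms(2,3) by auto
  moreover have "(\<lambda>x. if x \<in> F then f x else g x) ` F = G"
    using f by (simp add: bij_betw_def)
  ultimately show ?thesis using that by metis
qed

lemma exists_subset_sum_between:
  fixes w :: "'a \<Rightarrow> real"
  assumes "finite S" and "\<And>x. x \<in> S \<Longrightarrow> 0 \<le> w x \<and> w x \<le> 1" and "0 \<le> c" and "c \<le> sum w S"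
  shows "\<exists>T\<subseteq>S. c \<le> sum w T \<and> sum w T \<le> c + 1"
  using assms(1,2,4)
proof (induction S rule: finite_induct)
  case empty
  then show ?case using assms(3) by auto
next
  case (insert x S)
  show ?case
  proof (cases "sum w (insert x S) \<le> c + 1")
    case True
    then show ?thesis using insert.prems(2) by blast
  next
    case False
    moreover have "w x \<le> 1" using insert.prems(1) by blast
    ultimately have "c \<le> sum w S" using insert.hyps by simp
    then show ?thesis using insert.IH insert.prems(1) by blast
  qed
qed

section \<open>Full chains\<close>

lemma strict_chain_mono:
  assumes "\<forall>k<n. C k \<subset> C (Suc k)" and "i \<le> j" and "j \<le> n"
  shows "C i \<subseteq> C j"
  using assms(2,3)
proof (induction j)
  case (Suc j)
  show ?case
  proof (cases "i = Suc j")
    case False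
    then have "C i \<subseteq> C j" using Suc by simp
    also have "C j \<subseteq> C (Suc j)" using assms(1) Suc.prems by (metis Suc_le_eq psubset_imp_subset)
    finally show ?thesis .
  qed simp
qed simp

lemma strict_chain_card_gap:
  assumes "\<forall>k<n. C k \<subset> C (Suc k)" and "finite (C n)" and "i \<le> j" and "j \<le> n"
  shows "card (C i) + (j - i) \<le> card (C j)"
  using assms(3,4)
proof (induction j)
  case (Suc j)
  show ?case
  proof (cases "i = Suc j")
    case False
    have "finite (C (Suc j))"
      using strict_chain_mono[OF assms(1), of "Suc j" n] Suc.prems assms(2) finite_subset by blast
    then have "card (C j) < card (C (Suc j))"
      using assms(1) Suc.prems by (simp add: psubset_card_mono)
    then show ?thesis using Suc False by simp
  qed simp
qed simp

lemma full_chain_level_card: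
  assumes "C 0 = {}" and "C n = {1..n}" and "\<forall>k<n. C k \<subset> C (Suc k)" and "i \<le> n"
  shows "card (C i) = i"
proof -
  have "finite (C n)" using assms(2) by simp
  then have "card (C 0) + i \<le> card (C i)" "card (C i) + (n - i) \<le> card (C n)"
    using strict_chain_card_gap[OF assms(3) \<open>finite (C n)\<close>, of 0 i]
      strict_chain_card_gap[OF assms(3) \<open>finite (C n)\<close>, of i n] assms(4) by simp_all
  then show ?thesis using assms(1,2,4) by simp
qed

lemma full_chainsE:
  assumes "\<chi> \<in> full_chains n"
  obtains C where "\<chi> = C ` {0..n}" and "C 0 = {}" and "C n = {1..n}"
    and "\<forall>k<n. C k \<subset> C (Suc k)"
  using assms unfolding full_chains_def by blast

lemma full_chain_subset_Pow:
  assumes "\<chi> \<in> full_chains n"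
  shows "\<chi> \<subseteq> Pow {1..n}"
  using assms(1)
proof (rule full_chainsE)
  fix C assume C: "\<chi> = C ` {0..n}" "C n = {1..n}" "\<forall>k<n. C k \<subset> C (Suc k)"
  then have "C i \<subseteq> {1..n}" if "i \<le> n" for i
    using strict_chain_mono[OF C(3) that order_refl] by simp
  then show ?thesis unfolding C(1) by (simp add: image_subset_iff)
qed

lemma finite_full_chain: "\<chi> \<in> full_chains n \<Longrightarrow> finite \<chi>"
  by (elim full_chainsE) simp

lemma full_chain_comparable:
  assumes "\<chi> \<in> full_chains n" and "X \<in> \<chi>" and "Y \<in> \<chi>"
  shows "X \<subseteq> Y \<or> Y \<subseteq> X"
  using assms(1)
proof (rule full_chainsE)
  fix C assume "\<chi> = C ` {0..n}" and chain: "\<forall>k<n. C k \<subset> C (Suc k)"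
  then obtain i j where "i \<le> n" "j \<le> n" "X = C i" "Y = C j" using assms(2,3) by auto
  then show ?thesis using strict_chain_mono[OF chain] by (metis nat_le_linear)
qed

lemma full_chain_unique_level:
  assumes "\<chi> \<in> full_chains n" and "k \<le> n"
  shows "\<exists>!X. X \<in> \<chi> \<and> card X = k"
  using assms(1)
proof (rule full_chainsE)
  fix C assume C: "\<chi> = C ` {0..n}" "C 0 = {}" "C n = {1..n}" "\<forall>k<n. C k \<subset> C (Suc k)"
  then have "card (C i) = i" if "i \<le> n" for i
    using full_chain_level_card that by blast
  then show ?thesis using C(1) assms(2) by (intro ex1I[of _ "C k"]) auto
qed

lemma finite_full_chains: "finite (full_chains n)"
  by (rule finite_subset[of _ "Pow (Pow {1..n})"]) (use full_chain_subset_Pow in blast, simp)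

lemma full_chains_nonempty: "full_chains n \<noteq> {}"
proof -
  have "(\<lambda>i. {1..i}) ` {0..n} \<in> full_chains n"
    unfolding full_chains_def by (intro CollectI exI[of _ "\<lambda>i. {1..i}"]) auto
  then show ?thesis by blast
qed

lemma full_chain_image:
  assumes "bij_betw \<pi> {1..n} {1..n}" and "\<chi> \<in> full_chains n"
  shows "image \<pi> ` \<chi> \<in> full_chains n"
  using assms(2)
proof (rule full_chainsE)
  fix C assume C: "\<chi> = C ` {0..n}" "C 0 = {}" "C n = {1..n}" "\<forall>k<n. C k \<subset> C (Suc k)"
  have inj: "inj_on \<pi> {1..n}" using assms(1) bij_betw_def by blast
  have "\<pi> ` C k \<subset> \<pi> ` C (Suc k)" if "k < n" for k
  proof -
    have "C k \<subset> C (Suc k)" "C (Suc k) \<subseteq> {1..n}"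
      using C strict_chain_mono[OF C(4), of "Suc k" n] that by auto
    then show ?thesis using inj_on_subset[OF inj] by (simp add: image_strict_mono)
  qed
  moreover have "\<pi> ` C n = {1..n}" using C(3) assms(1) by (simp add: bij_betw_def)
  ultimately show ?thesis
    unfolding full_chains_def C(1) image_image using C(2)
    by (intro CollectI exI[of _ "\<lambda>i. \<pi> ` C i"]) simp
qed

definition chains_through :: "nat \<Rightarrow> nat set \<Rightarrow> nat" where
  "chains_through n F = card {\<chi> \<in> full_chains n. F \<in> \<chi>}"

lemma chains_through_le:
  assumes "F \<subseteq> {1..n}" and "G \<subseteq> {1..n}" and "card F = card G"
  shows "chains_through n F \<le> chains_through n G"
proof -
  obtain \<pi> where \<pi>: "bij_betw \<pi> {1..n} {1..n}" "\<pi> ` F = G"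
    using exists_bij_betw_image_eq[OF _ assms] by auto
  have "inj_on (image (image \<pi>)) (Pow (Pow {1..n}))"
    using \<pi>(1) by (intro inj_on_image_Pow) (simp add: bij_betw_def)
  then have "inj_on (image (image \<pi>)) {\<chi> \<in> full_chains n. F \<in> \<chi>}"
    by (rule inj_on_subset) (use full_chain_subset_Pow in blast)
  moreover have "image (image \<pi>) ` {\<chi> \<in> full_chains n. F \<in> \<chi>} \<subseteq> {\<chi> \<in> full_chains n. G \<in> \<chi>}"
    using full_chain_image[OF \<pi>(1)] \<pi>(2) by blast
  ultimately show ?thesis
    unfolding chains_through_def by (rule card_inj_on_le) (simp add: finite_full_chains)
qed

lemma sum_chains_through_level:
  assumes "k \<le> n"
  shows "(\<Sum>G | G \<subseteq> {1..n} \<and> card G = k. chains_through n G) = card (full_chains n)"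
proof -
  let ?K = "{G. G \<subseteq> {1..n} \<and> card G = k}"
  have "card {G\<in>?K. G \<in> \<chi>} = 1" if \<chi>: "\<chi> \<in> full_chains n" for \<chi>
  proof -
    obtain X where "X \<in> \<chi>" "card X = k" "\<And>Y. Y \<in> \<chi> \<and> card Y = k \<Longrightarrow> Y = X"
      using full_chain_unique_level[OF \<chi> assms] by blast
    moreover have "X \<subseteq> {1..n}" using full_chain_subset_Pow[OF \<chi>] \<open>X \<in> \<chi>\<close> by blast
    ultimately have "{G\<in>?K. G \<in> \<chi>} = {X}" by blast
    then show ?thesis by simp
  qed
  then have "(\<Sum>\<chi>\<in>full_chains n. card {G\<in>?K. G \<in> \<chi>}) = card (full_chains n)"
    by simp
  then show ?thesis unfolding chains_through_def
    by (simp add: sum_card_filter_mem_swap[OF finite_full_chains])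
qed

text \<open>Permutations of [n] act transitively on each level, so all k-sets lie on equally many full
  chains; as every full chain meets level k exactly once, that number is N / (n choose k).\<close>
lemma chains_through_eq:
  assumes "F \<subseteq> {1..n}"
  shows "real (chains_through n F) = real (card (full_chains n)) / real (n choose card F)"
proof -
  let ?K = "{G. G \<subseteq> {1..n} \<and> card G = card F}"
  have "card F \<le> n" using card_mono[OF _ assms] by simp
  have "chains_through n G = chains_through n F" if "G \<in> ?K" for G
    using chains_through_le[of G n F] chains_through_le[of F n G] assms that by simp
  then have "card (full_chains n) = card ?K * chains_through n F"
    using sum_chains_through_level[OF \<open>card F \<le> n\<close>] by simp
  moreover have "card ?K = n choose card F" using n_subsets[of "{1..n}" "card F"] by simp
  ultimately show ?thesis using \<open>card F \<le> n\<close> by (simp add: field_simps)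
qed

lemma sum_chains_through:
  assumes "\<G> \<subseteq> Pow {1..n}"
  shows "(\<Sum>F\<in>\<G>. real (chains_through n F)) = real (card (full_chains n)) * lubell n \<G>"
  unfolding lubell_def sum_distrib_left
  using assms by (intro sum.cong) (auto simp: chains_through_eq)

lemma sum_card_Int_full_chains:
  assumes "\<G> \<subseteq> Pow {1..n}"
  shows "(\<Sum>\<chi>\<in>full_chains n. real (card (\<G> \<inter> \<chi>))) = real (card (full_chains n)) * lubell n \<G>"
proof -
  have "finite \<G>" using assms finite_subset by blast
  have "(\<Sum>\<chi>\<in>full_chains n. card (\<G> \<inter> \<chi>)) = (\<Sum>\<chi>\<in>full_chains n. card {g\<in>\<G>. g \<in> \<chi>})"
    by (simp add: Int_def conj_commute)
  also have "\<dots> = (\<Sum>F\<in>\<G>. chains_through n F)"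
    unfolding chains_through_def
    by (rule sum_card_filter_mem_swap[OF finite_full_chains \<open>finite \<G>\<close>, symmetric])
  finally show ?thesis using sum_chains_through[OF assms] by (metis of_nat_sum)
qed

lemma exists_subfamily_lubell_between:
  assumes "\<F> \<subseteq> Pow {1..n}" and "0 \<le> c" and "c \<le> lubell n \<F>"
  obtains \<G> where "\<G> \<subseteq> \<F>" and "c \<le> lubell n \<G>" and "lubell n \<G> \<le> c + 1"
proof -
  have "finite \<F>" using assms(1) finite_subset by blast
  have weights: "0 \<le> 1 / real (n choose card F) \<and> 1 / real (n choose card F) \<le> 1"
    if "F \<in> \<F>" for F
  proof -
    have "card F \<le> n" using that assms(1) card_mono[of "{1..n}" F] by auto
    then show ?thesis by (simp add: Suc_le_eq)
  qed
  obtain \<G> where "\<G> \<subseteq> \<F>" "c \<le> (\<Sum>F\<in>\<G>. 1 / real (n choose card F))"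
    "(\<Sum>F\<in>\<G>. 1 / real (n choose card F)) \<le> c + 1"
    using exists_subset_sum_between[OF \<open>finite \<F>\<close> weights assms(2) assms(3)[unfolded lubell_def]]
    by blast
  then show ?thesis using that unfolding lubell_def by blast
qed

section \<open>Packing q-chains into a chain\<close>

lemma qchain_nth_psubset:
  assumes "q_chain q Q" and "i < j" and "j < q"
  shows "Q ! j \<subset> Q ! i"
  using assms(2,3)
proof (induction j)
  case (Suc j)
  have "Q ! Suc j \<subset> Q ! j" using assms(1) Suc.prems unfolding q_chain_def by blast
  then show ?case using Suc by (cases "i = j") auto
qed simp

lemma distinct_qchain:
  assumes "q_chain q Q"
  shows "distinct Q"
  unfolding distinct_conv_nth
proof (intro allI impI)
  fix i j assume "i < length Q" "j < length Q" "i \<noteq> j"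
  then consider "i < j" "j < q" | "j < i" "i < q"
    using assms unfolding q_chain_def by linarith
  then show "Q ! i \<noteq> Q ! j"
    by cases (use qchain_nth_psubset[OF assms] in blast)+
qed

lemma card_set_qchain: "q_chain q Q \<Longrightarrow> card (set Q) = q"
  using distinct_qchain distinct_card q_chain_def by metis

lemma qchain_nth_mem: "q_chain q Q \<Longrightarrow> k < q \<Longrightarrow> Q ! k \<in> set Q"
  unfolding q_chain_def by simp

lemma exists_qchain_in_chain:
  assumes "\<forall>X\<in>S. \<forall>Y\<in>S. X \<subseteq> Y \<or> Y \<subseteq> X" and "finite S" and "\<forall>X\<in>S. finite X"
    and "k \<le> card S"
  shows "\<exists>Q. q_chain k Q \<and> set Q \<subseteq> S"
  using assms
proof (induction k arbitrary: S)
  case 0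
  show ?case by (intro exI[of _ "[]"]) (simp add: q_chain_def)
next
  case (Suc k)
  have "S \<noteq> {}" using Suc.prems(4) by auto
  with Suc.prems(2) obtain G where G: "G \<in> S" "\<And>Y. Y \<in> S \<Longrightarrow> card Y \<le> card G"
    by (rule finite_ex_arg_max[where f = card]) blast
  have top: "Y \<subset> G" if Y: "Y \<in> S - {G}" for Y
  proof -
    have "finite Y" "card Y \<le> card G" using Y Suc.prems(3) G(2) by simp_all
    then have "\<not> G \<subset> Y" using psubset_card_mono leD by blast
    then show ?thesis using Suc.prems(1) G(1) Y by blast
  qed
  have rest: "\<forall>X\<in>S - {G}. \<forall>Y\<in>S - {G}. X \<subseteq> Y \<or> Y \<subseteq> X" "finite (S - {G})"
    "\<forall>X\<in>S - {G}. finite X" "k \<le> card (S - {G})"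
    using Suc.prems G(1) by auto
  obtain Q where Q: "q_chain k Q" "set Q \<subseteq> S - {G}"
    using Suc.IH[OF rest] by blast
  have "q_chain (Suc k) (G # Q)"
    unfolding q_chain_def
  proof (intro conjI allI impI)
    show "length (G # Q) = Suc k" using Q(1) unfolding q_chain_def by simp
    fix i assume i: "Suc i < Suc k"
    show "(G # Q) ! Suc i \<subset> (G # Q) ! i"
    proof (cases i)
      case 0
      then have "Q ! 0 \<in> S - {G}" using Q qchain_nth_mem[of k Q 0] i by auto
      then show ?thesis using top 0 by simp
    next
      case (Suc i')
      then show ?thesis using Q(1) i unfolding q_chain_def by simp
    qed
  qed
  then show ?case using Q(2) G(1) by (intro exI[of _ "G # Q"]) auto
qed

lemma exists_qchain_packing:
  assumes "1 \<le> q" and "\<forall>X\<in>S. \<forall>Y\<in>S. X \<subseteq> Y \<or> Y \<subseteq> X" and "finite S" and "\<forall>X\<in>S. finite X"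
  shows "\<exists>P. finite P \<and> (\<forall>Q\<in>P. q_chain q Q \<and> set Q \<subseteq> S) \<and> disjoint_family_on set P \<and>
           card S \<le> q * card P + (q - 1)"
  using assms(2-4)
proof (induction "card S" arbitrary: S rule: less_induct)
  case less
  show ?case
  proof (cases "card S < q")
    case True
    then show ?thesis by (intro exI[of _ "{}"]) (auto simp: disjoint_family_on_def)
  next
    case False
    then have "q \<le> card S" by simp
    then obtain Q where Q: "q_chain q Q" "set Q \<subseteq> S"
      using exists_qchain_in_chain[OF less.prems] by blast
    have card_rest: "card (S - set Q) = card S - q"
      using card_set_qchain[OF Q(1)] Q(2) less.prems(2) by (simp add: card_Diff_subset)
    then have smaller: "card (S - set Q) < card S" using False assms(1) by simp
    have rest: "\<forall>X\<in>S - set Q. \<forall>Y\<in>S - set Q. X \<subseteq> Y \<or> Y \<subseteq> X" "finite (S - set Q)"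
      "\<forall>X\<in>S - set Q. finite X"
      using less.prems by simp_all
    obtain P where P: "finite P" "\<forall>Q'\<in>P. q_chain q Q' \<and> set Q' \<subseteq> S - set Q"
      "disjoint_family_on set P" "card (S - set Q) \<le> q * card P + (q - 1)"
      using less.hyps[OF smaller rest] by blast
    have "set Q \<noteq> {}" using card_set_qchain[OF Q(1)] assms(1) by auto
    moreover have "set Q \<subseteq> S - set Q" if "Q \<in> P" using P(2) that by blast
    ultimately have "Q \<notin> P" by (metis Diff_disjoint Int_absorb2)
    then have "disjoint_family_on set (insert Q P)" "card (insert Q P) = card P + 1"
      using P(1-3) unfolding disjoint_family_on_def by auto
    moreover have "card S \<le> q * (card P + 1) + (q - 1)"
      using P(4) card_rest False by (simp add: algebra_simps)
    ultimately show ?thesis using P(1,2) Q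
      by (intro exI[of _ "insert Q P"]) auto
  qed
qed

text \<open>(D, i) \<in> A allows D as the i-th member of a marker; positions are 1-based as in Lmem and
  Msub, hence Suc k below.\<close>
definition allowed_qchains :: "nat \<Rightarrow> (nat set \<times> nat) set \<Rightarrow> nat set set \<Rightarrow> nat set list set" where
  "allowed_qchains q A \<chi> = {Q. q_chain q Q \<and> set Q \<subseteq> \<chi> \<and> (\<forall>k<q. (Q ! k, Suc k) \<in> A)}"

definition max_packing :: "nat \<Rightarrow> (nat set \<times> nat) set \<Rightarrow> nat set set \<Rightarrow> nat" where
  "max_packing q A \<chi> =
     Max (card ` {P. P \<subseteq> allowed_qchains q A \<chi> \<and> disjoint_family_on set P})"

lemma finite_allowed_qchains:
  assumes "finite \<chi>"
  shows "finite (allowed_qchains q A \<chi>)"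
proof (rule finite_subset)
  show "allowed_qchains q A \<chi> \<subseteq> {Q. set Q \<subseteq> \<chi> \<and> length Q = q}"
    unfolding allowed_qchains_def q_chain_def by blast
  show "finite {Q. set Q \<subseteq> \<chi> \<and> length Q = q}"
    using assms by (rule finite_lists_length_eq)
qed

lemma finite_packings:
  "finite \<chi> \<Longrightarrow> finite {P. P \<subseteq> allowed_qchains q A \<chi> \<and> disjoint_family_on set P}"
  by (rule finite_subset[of _ "Pow (allowed_qchains q A \<chi>)"]) (auto simp: finite_allowed_qchains)

lemma card_le_max_packing:
  assumes "finite \<chi>" and "P \<subseteq> allowed_qchains q A \<chi>" and "disjoint_family_on set P"
  shows "card P \<le> max_packing q A \<chi>"
  unfolding max_packing_def using assms finite_packings by (intro Max_ge) auto

lemma max_packing_attained: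
  assumes "finite \<chi>"
  obtains P where "P \<subseteq> allowed_qchains q A \<chi>" and "disjoint_family_on set P"
    and "card P = max_packing q A \<chi>"
proof -
  have "{} \<in> {P. P \<subseteq> allowed_qchains q A \<chi> \<and> disjoint_family_on set P}"
    by (simp add: disjoint_family_on_def)
  then have "max_packing q A \<chi> \<in> card ` {P. P \<subseteq> allowed_qchains q A \<chi> \<and> disjoint_family_on set P}"
    unfolding max_packing_def using finite_packings[OF assms] by (intro Max_in) auto
  then obtain P where "P \<subseteq> allowed_qchains q A \<chi>" "disjoint_family_on set P"
    "max_packing q A \<chi> = card P"
    by auto
  with that show ?thesis by simp
qed

lemma inj_on_nth_disjoint_qchains:
  assumes "disjoint_family_on set P" and "\<forall>Q\<in>P. q_chain q Q" and "k < q"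
  shows "inj_on (\<lambda>Q. Q ! k) P"
proof (rule inj_onI)
  fix Q1 Q2 assume "Q1 \<in> P" "Q2 \<in> P" "Q1 ! k = Q2 ! k"
  then have "Q1 ! k \<in> set Q1 \<inter> set Q2"
    using assms(2,3) qchain_nth_mem by (metis IntI)
  then show "Q1 = Q2"
    using assms(1) \<open>Q1 \<in> P\<close> \<open>Q2 \<in> P\<close> unfolding disjoint_family_on_def by blast
qed

text \<open>Forbidding (F, i) destroys at most one q-chain of a packing: the one with i-th member F.\<close>
lemma max_packing_le_Diff_singleton:
  assumes "finite \<chi>" and "i \<in> {1..q}"
  shows "max_packing q A \<chi> \<le>
    max_packing q (A - {(F, i)}) \<chi> + of_bool (\<exists>Q\<in>allowed_qchains q A \<chi>. Q ! (i - 1) = F)"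
proof -
  obtain P where P: "P \<subseteq> allowed_qchains q A \<chi>" "disjoint_family_on set P"
    "card P = max_packing q A \<chi>"
    using max_packing_attained[OF assms(1)] .
  have "finite P" using P(1) finite_allowed_qchains[OF assms(1)] finite_subset by blast
  let ?hit = "{Q\<in>P. Q ! (i - 1) = F}"
  have "P - ?hit \<subseteq> allowed_qchains q (A - {(F, i)}) \<chi>"
    using P(1) assms(2) unfolding allowed_qchains_def by auto
  moreover have "disjoint_family_on set (P - ?hit)"
    by (rule disjoint_family_on_mono[OF Diff_subset P(2)])
  ultimately have "card (P - ?hit) \<le> max_packing q (A - {(F, i)}) \<chi>"
    by (rule card_le_max_packing[OF assms(1)])
  moreover have "card ?hit \<le> of_bool (\<exists>Q\<in>allowed_qchains q A \<chi>. Q ! (i - 1) = F)"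
  proof (cases "\<exists>Q\<in>allowed_qchains q A \<chi>. Q ! (i - 1) = F")
    case True
    have "\<forall>Q\<in>P. q_chain q Q" using P(1) unfolding allowed_qchains_def by blast
    moreover have "i - 1 < q" using assms(2) by auto
    ultimately have "inj_on (\<lambda>Q. Q ! (i - 1)) P"
      by (rule inj_on_nth_disjoint_qchains[OF P(2)])
    then have "card ?hit \<le> 1"
      using \<open>finite P\<close> by (auto simp: card_le_Suc0_iff_eq dest: inj_onD)
    then show ?thesis using True by simp
  next
    case False
    then have "?hit = {}" using P(1) by blast
    then have "card ?hit = 0" by (simp only: card.empty)
    then show ?thesis by simp
  qed
  moreover have "card (P - ?hit) = card P - card ?hit" "card ?hit \<le> card P"
    using \<open>finite P\<close> by (auto intro: card_Diff_subset card_mono)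
  ultimately show ?thesis using P(3) by linarith
qed

section \<open>The packing potential\<close>

definition allowed_marked_chains ::
    "nat \<Rightarrow> nat \<Rightarrow> (nat set \<times> nat) set \<Rightarrow> (nat set set \<times> nat set list) set" where
  "allowed_marked_chains n q A = {(\<chi>, Q). \<chi> \<in> full_chains n \<and> Q \<in> allowed_qchains q A \<chi>}"

lemma set_allowed_qchain_subset:
  assumes "Q \<in> allowed_qchains q A \<chi>" and "A \<subseteq> \<F> \<times> UNIV"
  shows "set Q \<subseteq> \<F>"
proof
  fix D assume "D \<in> set Q"
  then obtain k where "k < length Q" "Q ! k = D" by (metis in_set_conv_nth)
  then have "(D, Suc k) \<in> A" using assms(1) unfolding allowed_qchains_def q_chain_def by auto
  then show "D \<in> \<F>" using assms(2) by blast
qed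

lemma allowed_marked_chains_subset:
  assumes "A \<subseteq> \<F> \<times> UNIV"
  shows "allowed_marked_chains n q A \<subseteq> marked_chains n q \<F>"
proof
  fix x assume "x \<in> allowed_marked_chains n q A"
  then obtain \<chi> Q where x: "x = (\<chi>, Q)" "\<chi> \<in> full_chains n" and Q: "Q \<in> allowed_qchains q A \<chi>"
    unfolding allowed_marked_chains_def by blast
  have "set Q \<subseteq> \<F>" using set_allowed_qchain_subset[OF Q assms] .
  then show "x \<in> marked_chains n q \<F>"
    using x Q unfolding marked_chains_def allowed_qchains_def by blast
qed

lemma Lmem_allowed_marked_chains_subset:
  assumes "A \<subseteq> \<F> \<times> UNIV" and "i \<in> {1..q}"
  shows "Lmem i (allowed_marked_chains n q A) \<subseteq> \<F>"
proof
  fix D assume "D \<in> Lmem i (allowed_marked_chains n q A)"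
  then obtain \<chi> Q where Q: "Q \<in> allowed_qchains q A \<chi>" and "Q ! (i - 1) = D"
    unfolding Lmem_def allowed_marked_chains_def by auto
  moreover have "Q ! (i - 1) \<in> set Q"
    using Q assms(2) qchain_nth_mem unfolding allowed_qchains_def by auto
  ultimately show "D \<in> \<F>" using set_allowed_qchain_subset[OF Q assms(1)] by blast
qed

lemma max_packing_le_card_Lmem_Int:
  assumes "\<chi> \<in> full_chains n" and "i \<in> {1..q}"
  shows "max_packing q A \<chi> \<le> card (Lmem i (allowed_marked_chains n q A) \<inter> \<chi>)"
proof -
  have "finite \<chi>" using assms(1) by (rule finite_full_chain)
  obtain P where P: "P \<subseteq> allowed_qchains q A \<chi>" "disjoint_family_on set P"
    "card P = max_packing q A \<chi>"
    using max_packing_attained[OF \<open>finite \<chi>\<close>] .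
  have "i - 1 < q" using assms(2) by auto
  have "\<forall>Q\<in>P. q_chain q Q" using P(1) unfolding allowed_qchains_def by blast
  then have inj: "inj_on (\<lambda>Q. Q ! (i - 1)) P"
    using inj_on_nth_disjoint_qchains[OF P(2)] \<open>i - 1 < q\<close> by blast
  have "(\<lambda>Q. Q ! (i - 1)) ` P \<subseteq> Lmem i (allowed_marked_chains n q A) \<inter> \<chi>"
  proof
    fix D assume "D \<in> (\<lambda>Q. Q ! (i - 1)) ` P"
    then obtain Q where Q: "Q \<in> P" "D = Q ! (i - 1)" by blast
    then have "(\<chi>, Q) \<in> allowed_marked_chains n q A"
      using P(1) assms(1) unfolding allowed_marked_chains_def by blast
    moreover have "D \<in> \<chi>"
      using Q P(1) qchain_nth_mem[OF _ \<open>i - 1 < q\<close>] unfolding allowed_qchains_def by blast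
    ultimately show "D \<in> Lmem i (allowed_marked_chains n q A) \<inter> \<chi>"
      unfolding Lmem_def using Q(2) by blast
  qed
  then have "card ((\<lambda>Q. Q ! (i - 1)) ` P) \<le> card (Lmem i (allowed_marked_chains n q A) \<inter> \<chi>)"
    using \<open>finite \<chi>\<close> by (intro card_mono) auto
  then show ?thesis using card_image[OF inj] P(3) by simp
qed

definition packing_potential :: "nat \<Rightarrow> nat \<Rightarrow> real \<Rightarrow> (nat set \<times> nat) set \<Rightarrow> real" where
  "packing_potential n q \<delta> A =
     (\<Sum>\<chi>\<in>full_chains n. real (max_packing q A \<chi>)) - \<delta> * (\<Sum>p\<in>A. real (chains_through n (fst p)))"

lemma sum_max_packing_le_Diff_singleton:
  assumes "i \<in> {1..q}"
    and hit: "\<forall>(\<chi>, Q)\<in>Msub (allowed_marked_chains n q A) F i. set Q \<inter> W \<noteq> {}"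
  shows "(\<Sum>\<chi>\<in>full_chains n. real (max_packing q A \<chi>)) \<le>
    (\<Sum>\<chi>\<in>full_chains n. real (max_packing q (A - {(F, i)}) \<chi>)) +
      real (card {\<chi> \<in> full_chains n. F \<in> \<chi> \<and> \<chi> \<inter> W \<noteq> {}})"
proof -
  have per_chain: "max_packing q A \<chi> \<le>
      max_packing q (A - {(F, i)}) \<chi> + of_bool (F \<in> \<chi> \<and> \<chi> \<inter> W \<noteq> {})"
    if \<chi>: "\<chi> \<in> full_chains n" for \<chi>
  proof -
    have "F \<in> \<chi> \<and> \<chi> \<inter> W \<noteq> {}" if "Q \<in> allowed_qchains q A \<chi>" "Q ! (i - 1) = F" for Q
    proof -
      have "(\<chi>, Q) \<in> Msub (allowed_marked_chains n q A) F i"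
        using that \<chi> unfolding Msub_def allowed_marked_chains_def by blast
      then have "set Q \<inter> W \<noteq> {}" using hit by blast
      moreover have "F \<in> set Q" "set Q \<subseteq> \<chi>"
        using that assms(1) qchain_nth_mem[of q Q "i - 1"] unfolding allowed_qchains_def by auto
      ultimately show ?thesis by blast
    qed
    then have "of_bool (\<exists>Q\<in>allowed_qchains q A \<chi>. Q ! (i - 1) = F) \<le>
        (of_bool (F \<in> \<chi> \<and> \<chi> \<inter> W \<noteq> {}) :: nat)"
      by auto
    with max_packing_le_Diff_singleton[OF finite_full_chain[OF \<chi>] assms(1), of A F]
    show ?thesis by linarith
  qed
  then have "(\<Sum>\<chi>\<in>full_chains n. real (max_packing q A \<chi>)) \<le>
      (\<Sum>\<chi>\<in>full_chains n.
        real (max_packing q (A - {(F, i)}) \<chi>) + of_bool (F \<in> \<chi> \<and> \<chi> \<inter> W \<noteq> {}))"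
    using of_nat_mono[OF per_chain, where 'a = real] by (intro sum_mono) simp
  also have "\<dots> = (\<Sum>\<chi>\<in>full_chains n. real (max_packing q (A - {(F, i)}) \<chi>)) +
      real (card {\<chi> \<in> full_chains n. F \<in> \<chi> \<and> \<chi> \<inter> W \<noteq> {}})"
    by (simp add: sum.distrib finite_full_chains Int_def)
  finally show ?thesis .
qed

lemma cond_prob_ge_of_potential_max:
  assumes "finite A"
    and max: "\<And>B. B \<subseteq> A \<Longrightarrow> packing_potential n q \<delta> B \<le> packing_potential n q \<delta> A"
    and "i \<in> {1..q}"
    and "Msub (allowed_marked_chains n q A) F i \<noteq> {}"
    and hit: "\<forall>(\<chi>, Q)\<in>Msub (allowed_marked_chains n q A) F i. set Q \<inter> W \<noteq> {}"
  shows "\<delta> \<le> cond_prob n W F"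
proof -
  obtain \<chi> Q where "\<chi> \<in> full_chains n" and Q: "Q \<in> allowed_qchains q A \<chi>" "Q ! (i - 1) = F"
    using assms(4) unfolding Msub_def allowed_marked_chains_def by blast
  have "i - 1 < q" "Suc (i - 1) = i" using assms(3) by auto
  then have "(Q ! (i - 1), Suc (i - 1)) \<in> A" using Q(1) unfolding allowed_qchains_def by blast
  then have "(F, i) \<in> A" using Q(2) \<open>Suc (i - 1) = i\<close> by simp
  have "F \<in> \<chi>"
    using Q qchain_nth_mem[OF _ \<open>i - 1 < q\<close>] unfolding allowed_qchains_def by blast
  then have through_pos: "0 < chains_through n F"
    unfolding chains_through_def using \<open>\<chi> \<in> full_chains n\<close> finite_full_chains
    by (simp add: card_gt_0_iff) blast
  let ?T = "\<lambda>A. \<Sum>\<chi>\<in>full_chains n. real (max_packing q A \<chi>)"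
  let ?c = "\<lambda>A. \<Sum>p\<in>A. real (chains_through n (fst p))"
  define hits where "hits = card {\<chi> \<in> full_chains n. F \<in> \<chi> \<and> \<chi> \<inter> W \<noteq> {}}"
  have "?c A = real (chains_through n F) + ?c (A - {(F, i)})"
    using sum.remove[OF \<open>finite A\<close> \<open>(F, i) \<in> A\<close>, of "\<lambda>p. real (chains_through n (fst p))"]
    by simp
  moreover have "?T A \<le> ?T (A - {(F, i)}) + real hits"
    unfolding hits_def by (rule sum_max_packing_le_Diff_singleton[OF assms(3) hit])
  moreover have "?T (A - {(F, i)}) - \<delta> * ?c (A - {(F, i)}) \<le> ?T A - \<delta> * ?c A"
    using max[of "A - {(F, i)}"] unfolding packing_potential_def by simp
  ultimately have "\<delta> * real (chains_through n F) \<le> real hits"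
    by (simp add: algebra_simps)
  moreover have "cond_prob n W F = real hits / real (chains_through n F)"
    unfolding cond_prob_def hits_def chains_through_def ..
  ultimately show ?thesis using through_pos by (simp add: pos_le_divide_eq)
qed

lemma robust_of_potential_max:
  assumes "finite A"
    and "\<And>B. B \<subseteq> A \<Longrightarrow> packing_potential n q \<delta> B \<le> packing_potential n q \<delta> A"
    and "\<delta>' < \<delta>"
  shows "robust n q (allowed_marked_chains n q A) \<delta>' F"
  unfolding robust_def
proof (intro ballI conjI notI)
  fix i assume i: "i \<in> {1..q}"
  have no_witness: False
    if "Msub (allowed_marked_chains n q A) F i \<noteq> {}"
      and "\<forall>(\<chi>, Q)\<in>Msub (allowed_marked_chains n q A) F i. set Q \<inter> W \<noteq> {}"
      and "cond_prob n W F \<le> \<delta>'" for W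
    using cond_prob_ge_of_potential_max[OF assms(1,2) i that(1,2)] that(3) assms(3) by simp
  show False if "lower_bad n (allowed_marked_chains n q A) i \<delta>' F"
    using that no_witness unfolding lower_bad_def by blast
  show False if "upper_bad n (allowed_marked_chains n q A) i \<delta>' F"
    using that no_witness unfolding upper_bad_def by blast
qed

lemma card_Int_full_chain_le_max_packing:
  assumes "1 \<le> q" and "\<chi> \<in> full_chains n"
  shows "card (\<G> \<inter> \<chi>) \<le> q * max_packing q (\<G> \<times> {1..q}) \<chi> + (q - 1)"
proof -
  have "finite \<chi>" using assms(2) by (rule finite_full_chain)
  have chain: "\<forall>X\<in>\<G> \<inter> \<chi>. \<forall>Y\<in>\<G> \<inter> \<chi>. X \<subseteq> Y \<or> Y \<subseteq> X"
    using full_chain_comparable[OF assms(2)] by blast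
  have finite_members: "\<forall>X\<in>\<G> \<inter> \<chi>. finite X"
    using full_chain_subset_Pow[OF assms(2)] finite_subset by blast
  obtain P where P: "\<forall>Q\<in>P. q_chain q Q \<and> set Q \<subseteq> \<G> \<inter> \<chi>"
    "disjoint_family_on set P" "card (\<G> \<inter> \<chi>) \<le> q * card P + (q - 1)"
    using exists_qchain_packing[OF assms(1) chain _ finite_members] \<open>finite \<chi>\<close> by auto
  have "P \<subseteq> allowed_qchains q (\<G> \<times> {1..q}) \<chi>"
    using P(1) qchain_nth_mem unfolding allowed_qchains_def by fastforce
  then have "card P \<le> max_packing q (\<G> \<times> {1..q}) \<chi>"
    using card_le_max_packing[OF \<open>finite \<chi>\<close> _ P(2)] by blast
  then show ?thesis using P(3) by (meson add_le_mono1 le_trans mult_le_mono2)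
qed

lemma sum_max_packing_lower_bound:
  assumes "1 \<le> q" and "\<G> \<subseteq> Pow {1..n}"
  shows "real (card (full_chains n)) * (lubell n \<G> - (real q - 1)) \<le>
    real q * (\<Sum>\<chi>\<in>full_chains n. real (max_packing q (\<G> \<times> {1..q}) \<chi>))"
proof -
  have "real (card (full_chains n)) * lubell n \<G> = (\<Sum>\<chi>\<in>full_chains n. real (card (\<G> \<inter> \<chi>)))"
    using sum_card_Int_full_chains[OF assms(2)] by simp
  also have "\<dots> \<le> (\<Sum>\<chi>\<in>full_chains n. real q * real (max_packing q (\<G> \<times> {1..q}) \<chi>) + (real q - 1))"
  proof (rule sum_mono)
    fix \<chi> assume "\<chi> \<in> full_chains n"
    from card_Int_full_chain_le_max_packing[OF assms(1) this, of \<G>]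
    show "real (card (\<G> \<inter> \<chi>)) \<le> real q * real (max_packing q (\<G> \<times> {1..q}) \<chi>) + (real q - 1)"
      using assms(1) by (simp add: of_nat_diff flip: of_nat_mult of_nat_le_iff)
  qed
  also have "\<dots> = real q * (\<Sum>\<chi>\<in>full_chains n. real (max_packing q (\<G> \<times> {1..q}) \<chi>)) +
      real (card (full_chains n)) * (real q - 1)"
    by (simp add: sum.distrib sum_distrib_left)
  finally show ?thesis by (simp add: algebra_simps)
qed

lemma sum_chains_through_pairs:
  assumes "\<G> \<subseteq> Pow {1..n}"
  shows "(\<Sum>p\<in>\<G> \<times> {1..q}. real (chains_through n (fst p))) =
    real q * (real (card (full_chains n)) * lubell n \<G>)"
proof -
  have "(\<Sum>p\<in>\<G> \<times> {1..q}. real (chains_through n (fst p))) =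
      (\<Sum>F\<in>\<G>. \<Sum>i\<in>{1..q}. real (chains_through n F))"
    unfolding sum.cartesian_product by (simp add: case_prod_beta)
  also have "\<dots> = real q * (\<Sum>F\<in>\<G>. real (chains_through n F))"
    by (simp add: sum_distrib_left)
  finally show ?thesis using sum_chains_through[OF assms] by simp
qed

lemma sum_max_packing_of_potential_max:
  assumes "1 \<le> q" and "\<G> \<subseteq> Pow {1..n}" and "0 \<le> \<delta>" and "A \<subseteq> \<G> \<times> {1..q}"
    and "packing_potential n q \<delta> (\<G> \<times> {1..q}) \<le> packing_potential n q \<delta> A"
  shows "real (card (full_chains n)) * ((lubell n \<G> - (real q - 1)) / real q - \<delta> * real q * lubell n \<G>)
    \<le> (\<Sum>\<chi>\<in>full_chains n. real (max_packing q A \<chi>))"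
proof -
  let ?N = "real (card (full_chains n))"
  have "0 \<le> \<delta> * (\<Sum>p\<in>A. real (chains_through n (fst p)))"
    using assms(3) by (simp add: sum_nonneg)
  then have "packing_potential n q \<delta> A \<le> (\<Sum>\<chi>\<in>full_chains n. real (max_packing q A \<chi>))"
    unfolding packing_potential_def by simp
  moreover have "?N * ((lubell n \<G> - (real q - 1)) / real q) \<le>
      (\<Sum>\<chi>\<in>full_chains n. real (max_packing q (\<G> \<times> {1..q}) \<chi>))"
    using sum_max_packing_lower_bound[OF assms(1,2)] assms(1)
    by (simp add: field_simps)
  ultimately show ?thesis
    using assms(5) sum_chains_through_pairs[OF assms(2), of q]
    unfolding packing_potential_def by (simp add: algebra_simps)
qed

lemma lubell_le_card_div:
  assumes "finite \<L>" and "0 < m" and "\<And>F. F \<in> \<L> \<Longrightarrow> m \<le> n choose card F"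
  shows "lubell n \<L> \<le> real (card \<L>) / real m"
proof -
  have "lubell n \<L> \<le> (\<Sum>F\<in>\<L>. 1 / real m)"
    unfolding lubell_def using assms(2,3) by (intro sum_mono frac_le) auto
  then show ?thesis by simp
qed

lemma card_Lmem_ge_of_sum_max_packing:
  assumes "\<F> \<subseteq> Pow {1..n}" and "\<F> \<noteq> {}" and "A \<subseteq> \<F> \<times> UNIV" and "i \<in> {1..q}"
    and "real (card (full_chains n)) * c \<le> (\<Sum>\<chi>\<in>full_chains n. real (max_packing q A \<chi>))"
  shows "c * real (Min ((\<lambda>F. n choose card F) ` \<F>)) \<le>
    real (card (Lmem i (allowed_marked_chains n q A)))"
proof -
  let ?L = "Lmem i (allowed_marked_chains n q A)"
  let ?m = "Min ((\<lambda>F. n choose card F) ` \<F>)"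
  let ?N = "real (card (full_chains n))"
  have "finite \<F>" using assms(1) finite_subset by blast
  have "?L \<subseteq> \<F>" using assms(3,4) by (rule Lmem_allowed_marked_chains_subset)
  then have "finite ?L" "?L \<subseteq> Pow {1..n}" using \<open>finite \<F>\<close> assms(1) finite_subset by auto
  have "0 < n choose card F" if "F \<in> \<F>" for F
    using that assms(1) card_mono[of "{1..n}" F] by auto
  then have "0 < ?m" using \<open>finite \<F>\<close> assms(2) by simp
  have "?N * c \<le> (\<Sum>\<chi>\<in>full_chains n. real (max_packing q A \<chi>))"
    by (fact assms(5))
  also have "\<dots> \<le> (\<Sum>\<chi>\<in>full_chains n. real (card (?L \<inter> \<chi>)))"
    using max_packing_le_card_Lmem_Int[OF _ assms(4)] by (intro sum_mono) simp
  also have "\<dots> = ?N * lubell n ?L"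
    by (rule sum_card_Int_full_chains[OF \<open>?L \<subseteq> Pow {1..n}\<close>])
  also have "\<dots> \<le> ?N * (real (card ?L) / real ?m)"
  proof (intro mult_left_mono)
    have "?m \<le> n choose card F" if "F \<in> ?L" for F
      using that \<open>?L \<subseteq> \<F>\<close> \<open>finite \<F>\<close> by (intro Min_le) auto
    then show "lubell n ?L \<le> real (card ?L) / real ?m"
      by (rule lubell_le_card_div[OF \<open>finite ?L\<close> \<open>0 < ?m\<close>])
  qed simp
  finally have "?N * c \<le> ?N * (real (card ?L) / real ?m)" .
  moreover have "0 < ?N"
    using finite_full_chains full_chains_nonempty by (simp add: card_gt_0_iff)
  ultimately have "c \<le> real (card ?L) / real ?m" by (rule mult_left_le_imp_le)
  then show ?thesis using \<open>0 < ?m\<close> by (simp add: pos_le_divide_eq)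
qed

section \<open>Self-robust families of marked chains\<close>

lemma excess_minus_penalty_ge:
  fixes q :: nat and \<epsilon> \<mu> :: real
  assumes "1 \<le> q" and "0 < \<epsilon>" and "real q - 1 + \<epsilon> \<le> \<mu>" and "\<mu> \<le> real q + \<epsilon>"
  shows "2 * \<epsilon> / (3 * real q) \<le>
    (\<mu> - (real q - 1)) / real q - \<epsilon> / (3 * real q ^ 2 * (real q + \<epsilon>)) * real q * \<mu>"
proof -
  have q: "0 < real q" and "real q + \<epsilon> \<noteq> 0" using assms(1,2) by simp_all
  have "\<epsilon> / (3 * real q ^ 2 * (real q + \<epsilon>)) * real q * \<mu> \<le>
      \<epsilon> / (3 * real q ^ 2 * (real q + \<epsilon>)) * real q * (real q + \<epsilon>)"
    using assms q by (intro mult_left_mono) auto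
  also have "\<dots> = \<epsilon> * (real q * (real q + \<epsilon>)) / (3 * real q * (real q * (real q + \<epsilon>)))"
    by (simp add: power2_eq_square algebra_simps)
  also have "\<dots> = \<epsilon> / (3 * real q)"
    using \<open>real q + \<epsilon> \<noteq> 0\<close> q by (intro mult_divide_mult_cancel_right) simp
  finally have "\<epsilon> / (3 * real q ^ 2 * (real q + \<epsilon>)) * real q * \<mu> \<le> \<epsilon> / (3 * real q)" .
  moreover have "\<epsilon> / real q \<le> (\<mu> - (real q - 1)) / real q"
    using assms(3) q by (simp add: divide_right_mono)
  moreover have "2 * \<epsilon> / (3 * real q) = \<epsilon> / real q - \<epsilon> / (3 * real q)"
    using q by (simp add: field_simps)
  ultimately show ?thesis by linarith
qed

lemma self_robust_marked_chains_exist: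
  fixes q :: nat and \<epsilon> :: real
  assumes "1 \<le> q" and "0 < \<epsilon>" and \<F>: "\<F> \<subseteq> Pow {1..n}"
    and weight: "real q - 1 + \<epsilon> \<le> lubell n \<F>"
  obtains M where "M \<subseteq> marked_chains n q \<F>"
    and "\<And>F. robust n q M (\<epsilon> / (6 * real q ^ 2 * (real q + \<epsilon>))) F"
    and "\<And>i. i \<in> {1..q} \<Longrightarrow>
      2 * \<epsilon> / (3 * real q) * real (Min ((\<lambda>F. n choose card F) ` \<F>)) \<le> real (card (Lmem i M))"
proof -
  define \<delta> where "\<delta> = \<epsilon> / (3 * real q ^ 2 * (real q + \<epsilon>))"
  have "0 < \<delta>" unfolding \<delta>_def using assms(1,2) by simp
  have "\<F> \<noteq> {}" using weight assms(1,2) by (auto simp: lubell_def)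
  \<comment> \<open>Capping the Lubell weight at q + \<epsilon> makes the penalty \<delta> q \<mu> at most \<epsilon>/(3q),
    uniformly in n.\<close>
  obtain \<G> where \<G>: "\<G> \<subseteq> \<F>" "real q - 1 + \<epsilon> \<le> lubell n \<G>" "lubell n \<G> \<le> real q + \<epsilon>"
    using exists_subfamily_lubell_between[OF \<F> _ weight] assms(1,2) by auto
  have "\<G> \<subseteq> Pow {1..n}" using \<G>(1) \<F> by blast
  then have "finite (\<G> \<times> {1..q})" using finite_subset by blast
  then obtain A where "A \<in> Pow (\<G> \<times> {1..q})" and A_max: "\<And>B. B \<in> Pow (\<G> \<times> {1..q}) \<Longrightarrow>
      packing_potential n q \<delta> B \<le> packing_potential n q \<delta> A"
    by (rule finite_ex_arg_max[OF finite_Pow_iff[THEN iffD2] Pow_not_empty,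
          where f = "packing_potential n q \<delta>"]) blast
  then have "A \<subseteq> \<G> \<times> {1..q}" by simp
  then have "A \<subseteq> \<F> \<times> UNIV" and "finite A"
    using \<G>(1) \<open>finite (\<G> \<times> {1..q})\<close> finite_subset by auto
  let ?M = "allowed_marked_chains n q A"
  have "packing_potential n q \<delta> B \<le> packing_potential n q \<delta> A" if "B \<subseteq> A" for B
    using A_max that \<open>A \<subseteq> \<G> \<times> {1..q}\<close> by blast
  moreover have "\<epsilon> / (6 * real q ^ 2 * (real q + \<epsilon>)) = \<delta> / 2"
    unfolding \<delta>_def by simp
  then have "\<epsilon> / (6 * real q ^ 2 * (real q + \<epsilon>)) < \<delta>"
    using \<open>0 < \<delta>\<close> by linarith
  ultimately have "robust n q ?M (\<epsilon> / (6 * real q ^ 2 * (real q + \<epsilon>))) F" for F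
    using robust_of_potential_max[OF \<open>finite A\<close>] by blast
  moreover have "real (card (full_chains n)) * (2 * \<epsilon> / (3 * real q)) \<le>
      (\<Sum>\<chi>\<in>full_chains n. real (max_packing q A \<chi>))"
    using sum_max_packing_of_potential_max[OF assms(1) \<open>\<G> \<subseteq> Pow {1..n}\<close> _
        \<open>A \<subseteq> \<G> \<times> {1..q}\<close> A_max] \<open>0 < \<delta>\<close>
      mult_left_mono[OF excess_minus_penalty_ge[OF assms(1,2) \<G>(2,3)], of "real (card (full_chains n))"]
    unfolding \<delta>_def by simp
  then have "2 * \<epsilon> / (3 * real q) * real (Min ((\<lambda>F. n choose card F) ` \<F>)) \<le> real (card (Lmem i ?M))"
    if "i \<in> {1..q}" for i
    using card_Lmem_ge_of_sum_max_packing[OF \<F> \<open>\<F> \<noteq> {}\<close> \<open>A \<subseteq> \<F> \<times> UNIV\<close> that] by blast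
  ultimately show ?thesis
    using that allowed_marked_chains_subset[OF \<open>A \<subseteq> \<F> \<times> UNIV\<close>] by blast
qed

lemma constant_robust_sequence:
  assumes "M \<subseteq> marked_chains n q \<F>" and "\<And>F. robust n q M \<delta> F"
    and "\<And>i. i \<in> {1..q} \<Longrightarrow> b \<le> real (card (Lmem i M))"
  shows "\<exists>Ms. (\<forall>j\<le>k. Ms j \<subseteq> marked_chains n q \<F>) \<and> (\<forall>j<k. Ms (Suc j) \<subseteq> Ms j) \<and>
    (\<forall>j\<in>{1..k}. (\<forall>(\<chi>, Q)\<in>Ms j. \<forall>F\<in>set Q. robust n q (Ms (j - 1)) \<delta> F) \<and>
      (\<forall>i\<in>{1..q}. b \<le> real (card (Lmem i (Ms j)))))"
  using assms by (intro exI[of _ "\<lambda>_. M"]) auto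

lemma Btilde_subset_Pow: "Btilde n \<subseteq> Pow {1..n}"
  unfolding Btilde_def by blast

theorem theorem4p12:
  fixes P :: "'a set" and le :: "'a \<Rightarrow> 'a \<Rightarrow> bool"
  assumes "tree_poset P le"
  shows "\<forall>q::nat. q \<ge> 1 \<longrightarrow> (\<forall>\<epsilon>::real. \<epsilon> > 0 \<longrightarrow> (\<exists>\<delta>::real. \<delta> > 0 \<and>
    (\<forall>(n::nat) (\<F>::nat set set). \<F> \<subseteq> Btilde n \<and> lubell n \<F> \<ge> real q - 1 + \<epsilon> \<longrightarrow>
      (\<exists>M :: nat \<Rightarrow> (nat set set \<times> nat set list) set.
         (\<forall>j\<le>card P. M j \<subseteq> marked_chains n q \<F>) \<and>
         (\<forall>j<card P. M (Suc j) \<subseteq> M j) \<and>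
         (\<forall>j\<in>{1..card P}.
            (\<forall>(\<chi>, Q)\<in>M j. \<forall>F\<in>set Q. robust n q (M (j - 1)) \<delta> F) \<and>
            (\<forall>i\<in>{1..q}. real (card (Lmem i (M j))) \<ge>
                2 * \<epsilon> / (3 * real q) * real (Min ((\<lambda>F. n choose card F) ` \<F>))))))))"
proof (intro allI impI, goal_cases)
  case (1 q \<epsilon>)
  show ?case
  proof (intro exI[of _ "\<epsilon> / (6 * real q ^ 2 * (real q + \<epsilon>))"] conjI allI impI, goal_cases)
    case 1
    show ?case using \<open>1 \<le> q\<close> \<open>0 < \<epsilon>\<close> by simp
  next
    case (2 n \<F>)
    then have "\<F> \<subseteq> Pow {1..n}" "real q - 1 + \<epsilon> \<le> lubell n \<F>"
      using Btilde_subset_Pow by blast+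
    with \<open>1 \<le> q\<close> \<open>0 < \<epsilon>\<close> obtain M where "M \<subseteq> marked_chains n q \<F>"
      "\<And>F. robust n q M (\<epsilon> / (6 * real q ^ 2 * (real q + \<epsilon>))) F"
      "\<And>i. i \<in> {1..q} \<Longrightarrow>
        2 * \<epsilon> / (3 * real q) * real (Min ((\<lambda>F. n choose card F) ` \<F>)) \<le> real (card (Lmem i M))"
      by (rule self_robust_marked_chains_exist) blast
    then show ?case by (rule constant_robust_sequence)
  qed
qed

end
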